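(* Let $I$ be a finite set, and let $Y=(Y_i)_{i\in I}$ and $Y'=(Y'_i)_{i\in I}$ be two independent vectors of independent random variables all having a common distribution. For $S\subseteq I$ let $Y^S_i=Y'_i$ if $i\in S$ and $Y^S_i=Y_i$ otherwise. Let $f:\mathbb{R}^I\to\mathbb{R}$ satisfy $\mathbb{E}[f(Y)^2]<\infty$, and let $\mathscr{S},\tilde{\mathscr{S}}$ be random subsets of $I$, independent of $(Y,Y')$, with $\mathscr{S}\subseteq\tilde{\mathscr{S}}$ almost surely. Then \[ \operatorname{Cov}\big(f(Y),f(Y^{\mathscr{S}})\big)\ge\operatorname{Cov}\big(f(Y),f(Y^{\tilde{\mathscr{S}}})\big). \] *)

theory Defs
  imports "HOL-Probability.Probability"
begin

definition covariance :: "'a measure \<Rightarrow> ('a \<Rightarrow> real) \<Rightarrow> ('a \<Rightarrow> real) \<Rightarrow> real" where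
  "covariance M X Z =
     integral\<^sup>L M (\<lambda>\<omega>. (X \<omega> - integral\<^sup>L M X) * (Z \<omega> - integral\<^sup>L M Z))"

definition resample :: "'i set \<Rightarrow> ('i \<Rightarrow> 'a \<Rightarrow> real) \<Rightarrow> ('i \<Rightarrow> 'a \<Rightarrow> real)
    \<Rightarrow> ('a \<Rightarrow> 'i set) \<Rightarrow> 'a \<Rightarrow> ('i \<Rightarrow> real)" where
  "resample I Y Y' S \<omega> = (\<lambda>i\<in>I. if i \<in> S \<omega> then Y' i \<omega> else Y i \<omega>)"

end

theory Submission
  imports Defs
begin

(* Write Y^A for Y with the coordinates in A replaced by those of Y'. For a fixed set A,
   E[f(Y) f(Y^A)] is the second moment of the conditional expectation of f(Y) given the
   coordinates outside A; by the tower property and Jensen's inequality this second moment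
   can only decrease when A grows. Since (S, S') is independent of (Y, Y') and takes finitely
   many values, the covariance for the random set S is the average of these moments over the
   law of (S, S') minus (E f(Y))^2; as S is contained in S' almost surely, only values (A, B)
   with A contained in B carry weight. *)

lemma integrable_mult_of_square_integrable:
  fixes u v :: "'a \<Rightarrow> real"
  assumes [measurable]: "u \<in> borel_measurable N" "v \<in> borel_measurable N"
    and "integrable N (\<lambda>x. (u x)\<^sup>2)" "integrable N (\<lambda>x. (v x)\<^sup>2)"
  shows "integrable N (\<lambda>x. u x * v x)"
proof (rule Bochner_Integration.integrable_bound)
  show "integrable N (\<lambda>x. (u x)\<^sup>2 + (v x)\<^sup>2)"
    using assms(3,4) by simp
  have "\<bar>a * b\<bar> \<le> a\<^sup>2 + b\<^sup>2" for a b :: real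
    using sum_squares_bound[of "\<bar>a\<bar>" "\<bar>b\<bar>"] mult_nonneg_nonneg[OF abs_ge_zero abs_ge_zero, of a b]
    by (simp only: abs_mult power2_abs)
  then show "AE x in N. norm (u x * v x) \<le> norm ((u x)\<^sup>2 + (v x)\<^sup>2)"
    by simp
qed simp

lemma (in prob_space) square_expectation_le:
  fixes X :: "'a \<Rightarrow> real"
  assumes "integrable M X" "integrable M (\<lambda>x. (X x)\<^sup>2)"
  shows "(expectation X)\<^sup>2 \<le> expectation (\<lambda>x. (X x)\<^sup>2)"
  using variance_positive[of X] variance_eq[OF assms] by simp

lemma (in prob_space) covariance_eq:
  fixes X Z :: "'a \<Rightarrow> real"
  assumes "integrable M X" "integrable M Z" "integrable M (\<lambda>\<omega>. X \<omega> * Z \<omega>)"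
  shows "covariance M X Z = expectation (\<lambda>\<omega>. X \<omega> * Z \<omega>) - expectation X * expectation Z"
proof -
  have expand: "(\<lambda>\<omega>. (X \<omega> - expectation X) * (Z \<omega> - expectation Z))
      = (\<lambda>\<omega>. (X \<omega> * Z \<omega> - expectation Z * X \<omega>) - (expectation X * Z \<omega> - expectation X * expectation Z))"
    by (auto simp: algebra_simps)
  show ?thesis
    unfolding covariance_def expand using assms
    by (simp add: Bochner_Integration.integral_diff prob_space)
qed

lemma (in pair_prob_space)
  fixes h :: "'a \<times> 'b \<Rightarrow> real"
  assumes [measurable]: "h \<in> borel_measurable (M1 \<Otimes>\<^sub>M M2)"
    and square_int: "integrable (M1 \<Otimes>\<^sub>M M2) (\<lambda>p. (h p)\<^sup>2)"
  shows integrable_square_partial_integral: "integrable M1 (\<lambda>x. (\<integral>y. h (x, y) \<partial>M2)\<^sup>2)"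
    and integral_square_partial_integral_le:
      "(\<integral>x. (\<integral>y. h (x, y) \<partial>M2)\<^sup>2 \<partial>M1) \<le> (\<integral>p. (h p)\<^sup>2 \<partial>(M1 \<Otimes>\<^sub>M M2))"
proof -
  have "integrable (M1 \<Otimes>\<^sub>M M2) h"
    by (rule P.square_integrable_imp_integrable[OF _ square_int]) measurable
  then have "AE x in M1. integrable M2 (\<lambda>y. h (x, y))"
    by (rule AE_integrable_fst')
  moreover have "AE x in M1. integrable M2 (\<lambda>y. (h (x, y))\<^sup>2)"
    using AE_integrable_fst'[OF square_int] by simp
  ultimately have le: "AE x in M1. (\<integral>y. h (x, y) \<partial>M2)\<^sup>2 \<le> (\<integral>y. (h (x, y))\<^sup>2 \<partial>M2)"
    by eventually_elim (rule M2.square_expectation_le)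
  have bound: "integrable M1 (\<lambda>x. \<integral>y. (h (x, y))\<^sup>2 \<partial>M2)"
    using integrable_fst'[OF square_int] by simp
  show int: "integrable M1 (\<lambda>x. (\<integral>y. h (x, y) \<partial>M2)\<^sup>2)"
    by (rule Bochner_Integration.integrable_bound[OF bound]) (use le in \<open>auto elim!: eventually_mono\<close>)
  have "(\<integral>x. (\<integral>y. h (x, y) \<partial>M2)\<^sup>2 \<partial>M1) \<le> (\<integral>x. (\<integral>y. (h (x, y))\<^sup>2 \<partial>M2) \<partial>M1)"
    by (rule integral_mono_AE[OF int bound le])
  also have "\<dots> = (\<integral>p. (h p)\<^sup>2 \<partial>(M1 \<Otimes>\<^sub>M M2))"
    using integral_fst'[OF square_int] by simp
  finally show "(\<integral>x. (\<integral>y. h (x, y) \<partial>M2)\<^sup>2 \<partial>M1) \<le> (\<integral>p. (h p)\<^sup>2 \<partial>(M1 \<Otimes>\<^sub>M M2))" .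
qed

lemma (in pair_prob_space)
  fixes g :: "'a \<Rightarrow> real"
  assumes "g \<in> borel_measurable M1"
  shows integrable_comp_fst_iff: "integrable (M1 \<Otimes>\<^sub>M M2) (\<lambda>p. g (fst p)) \<longleftrightarrow> integrable M1 g"
    and integral_comp_fst: "(\<integral>p. g (fst p) \<partial>(M1 \<Otimes>\<^sub>M M2)) = integral\<^sup>L M1 g"
  using integrable_distr_eq[OF measurable_fst[of M1 M2] assms] integral_distr[OF measurable_fst[of M1 M2] assms]
  by (simp_all add: M2.distr_pair_fst)

definition replace_on :: "'i set \<Rightarrow> 'i set \<Rightarrow> ('i \<Rightarrow> 'a) \<Rightarrow> ('i \<Rightarrow> 'a) \<Rightarrow> 'i \<Rightarrow> 'a" where
  "replace_on I A x y = (\<lambda>i\<in>I. if i \<in> A then y i else x i)"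

lemma replace_on_replace_on: "replace_on I A (replace_on I A x y) z = replace_on I A x z"
  by (auto simp: replace_on_def fun_eq_iff)

lemma replace_on_replace_on_subset:
  "A \<subseteq> B \<Longrightarrow> replace_on I A (replace_on I B x y) z = replace_on I B x (replace_on I A y z)"
  by (auto simp: replace_on_def fun_eq_iff)

lemma resample_eq_replace_on:
  "resample I Y Y' S \<omega> = replace_on I (S \<omega>) (\<lambda>i\<in>I. Y i \<omega>) (\<lambda>i\<in>I. Y' i \<omega>)"
  by (auto simp: resample_def replace_on_def fun_eq_iff)

text \<open>The conditional expectation of g given the coordinates outside A.\<close>
definition average_out :: "('i \<Rightarrow> 'a measure) \<Rightarrow> 'i set \<Rightarrow> 'i set \<Rightarrow> (('i \<Rightarrow> 'a) \<Rightarrow> real) \<Rightarrow> ('i \<Rightarrow> 'a) \<Rightarrow> real"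
  where "average_out M I A g x = (\<integral>y. g (replace_on I A x y) \<partial>Pi\<^sub>M I M)"

definition resample_moment :: "('i \<Rightarrow> 'a measure) \<Rightarrow> 'i set \<Rightarrow> (('i \<Rightarrow> 'a) \<Rightarrow> real) \<Rightarrow> 'i set \<Rightarrow> real"
  where "resample_moment M I g A =
    (\<integral>p. g (fst p) * g (replace_on I A (fst p) (snd p)) \<partial>(Pi\<^sub>M I M \<Otimes>\<^sub>M Pi\<^sub>M I M))"

lemma finite_product_prob_space_const:
  "prob_space \<mu> \<Longrightarrow> finite I \<Longrightarrow> finite_product_prob_space (\<lambda>_. \<mu>) I"
  by (simp add: finite_product_prob_space_def finite_product_sigma_finite_def product_prob_space_def
      finite_product_sigma_finite_axioms_def product_prob_space_axioms_def product_sigma_finite_def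
      prob_space_imp_sigma_finite)

context finite_product_prob_space
begin

sublocale PP: pair_prob_space "Pi\<^sub>M I M" "Pi\<^sub>M I M"
  by unfold_locales

lemma measurable_replace_on[measurable]:
  "(\<lambda>p. replace_on I A (fst p) (snd p)) \<in> measurable (Pi\<^sub>M I M \<Otimes>\<^sub>M Pi\<^sub>M I M) (Pi\<^sub>M I M)"
  unfolding replace_on_def by (rule measurable_restrict) auto

lemma measurable_replace_on_right:
  "x \<in> space (Pi\<^sub>M I M) \<Longrightarrow> replace_on I A x \<in> measurable (Pi\<^sub>M I M) (Pi\<^sub>M I M)"
  using measurable_comp[OF measurable_Pair1' measurable_replace_on, of x] by (simp add: comp_def)

lemma distr_replace_on:
  "distr (Pi\<^sub>M I M \<Otimes>\<^sub>M Pi\<^sub>M I M) (Pi\<^sub>M I M) (\<lambda>p. replace_on I A (fst p) (snd p)) = Pi\<^sub>M I M"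
proof (rule PiM_eqI[OF finite_index])
  fix X assume X: "\<And>i. i \<in> I \<Longrightarrow> X i \<in> sets (M i)"
  let ?kept = "Pi\<^sub>E I (\<lambda>i. if i \<in> A then space (M i) else X i)"
    and ?replaced = "Pi\<^sub>E I (\<lambda>i. if i \<in> A then X i else space (M i))"
  have sets: "?kept \<in> sets (Pi\<^sub>M I M)" "?replaced \<in> sets (Pi\<^sub>M I M)"
    using X by (auto intro!: sets_PiM_I_finite finite_index)
  have "(\<lambda>p. replace_on I A (fst p) (snd p)) -` Pi\<^sub>E I X \<inter> space (Pi\<^sub>M I M \<Otimes>\<^sub>M Pi\<^sub>M I M)
      = ?kept \<times> ?replaced"
    using X[THEN sets.sets_into_space]
    by (auto simp: space_pair_measure space_PiM replace_on_def PiE_iff split: if_splits) (meson subsetD)+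
  then have "emeasure (distr (Pi\<^sub>M I M \<Otimes>\<^sub>M Pi\<^sub>M I M) (Pi\<^sub>M I M) (\<lambda>p. replace_on I A (fst p) (snd p))) (Pi\<^sub>E I X)
      = emeasure (Pi\<^sub>M I M \<Otimes>\<^sub>M Pi\<^sub>M I M) (?kept \<times> ?replaced)"
    using X by (simp add: emeasure_distr sets_PiM_I_finite finite_index)
  also have "\<dots> = emeasure (Pi\<^sub>M I M) ?kept * emeasure (Pi\<^sub>M I M) ?replaced"
    by (rule emeasure_pair_measure_Times[OF sets])
  also have "\<dots> = (\<Prod>i\<in>I. emeasure (M i) (if i \<in> A then space (M i) else X i))
      * (\<Prod>i\<in>I. emeasure (M i) (if i \<in> A then X i else space (M i)))"
    using X by (subst (1 2) measure_times) auto
  also have "\<dots> = (\<Prod>i\<in>I. emeasure (M i) (X i))"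
    unfolding prod.distrib[symmetric] by (intro prod.cong) (auto simp: M.emeasure_space_1)
  finally show "emeasure (distr (Pi\<^sub>M I M \<Otimes>\<^sub>M Pi\<^sub>M I M) (Pi\<^sub>M I M) (\<lambda>p. replace_on I A (fst p) (snd p))) (Pi\<^sub>E I X)
      = (\<Prod>i\<in>I. emeasure (M i) (X i))" .
qed simp

lemma
  fixes g :: "('a \<Rightarrow> 'b) \<Rightarrow> real"
  assumes [measurable]: "g \<in> borel_measurable (Pi\<^sub>M I M)"
  shows integrable_replace_on_iff:
      "integrable (Pi\<^sub>M I M \<Otimes>\<^sub>M Pi\<^sub>M I M) (\<lambda>p. g (replace_on I A (fst p) (snd p))) \<longleftrightarrow> integrable (Pi\<^sub>M I M) g"
    and integral_replace_on:
      "(\<integral>p. g (replace_on I A (fst p) (snd p)) \<partial>(Pi\<^sub>M I M \<Otimes>\<^sub>M Pi\<^sub>M I M)) = integral\<^sup>L (Pi\<^sub>M I M) g"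
  using integrable_distr_eq[OF measurable_replace_on, of g A] integral_distr[OF measurable_replace_on, of g A]
  by (simp_all add: distr_replace_on)

lemma borel_measurable_average_out[measurable]:
  "g \<in> borel_measurable (Pi\<^sub>M I M) \<Longrightarrow> average_out M I A g \<in> borel_measurable (Pi\<^sub>M I M)"
  unfolding average_out_def[abs_def]
  by (rule borel_measurable_lebesgue_integral) (simp add: split_beta')

lemma average_out_replace_on: "average_out M I A g (replace_on I A x y) = average_out M I A g x"
  by (simp add: average_out_def replace_on_replace_on)

lemma
  fixes g :: "('a \<Rightarrow> 'b) \<Rightarrow> real"
  assumes [measurable]: "g \<in> borel_measurable (Pi\<^sub>M I M)" and square_int: "integrable (Pi\<^sub>M I M) (\<lambda>x. (g x)\<^sup>2)"
  shows integrable_square_average_out: "integrable (Pi\<^sub>M I M) (\<lambda>x. (average_out M I A g x)\<^sup>2)"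
    and integral_square_average_out_le:
      "(\<integral>x. (average_out M I A g x)\<^sup>2 \<partial>Pi\<^sub>M I M) \<le> (\<integral>x. (g x)\<^sup>2 \<partial>Pi\<^sub>M I M)"
proof -
  have square_meas: "(\<lambda>x. (g x)\<^sup>2) \<in> borel_measurable (Pi\<^sub>M I M)"
    by measurable
  have "integrable (Pi\<^sub>M I M \<Otimes>\<^sub>M Pi\<^sub>M I M) (\<lambda>p. (g (replace_on I A (fst p) (snd p)))\<^sup>2)"
    using integrable_replace_on_iff[OF square_meas, of A] square_int by simp
  from PP.integrable_square_partial_integral[OF _ this] PP.integral_square_partial_integral_le[OF _ this]
  show "integrable (Pi\<^sub>M I M) (\<lambda>x. (average_out M I A g x)\<^sup>2)"
    and "(\<integral>x. (average_out M I A g x)\<^sup>2 \<partial>Pi\<^sub>M I M) \<le> (\<integral>x. (g x)\<^sup>2 \<partial>Pi\<^sub>M I M)"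
    by (simp_all add: average_out_def integral_replace_on[OF square_meas])
qed

lemma integrable_resample_product:
  fixes g :: "('a \<Rightarrow> 'b) \<Rightarrow> real"
  assumes [measurable]: "g \<in> borel_measurable (Pi\<^sub>M I M)" and square_int: "integrable (Pi\<^sub>M I M) (\<lambda>x. (g x)\<^sup>2)"
  shows "integrable (Pi\<^sub>M I M \<Otimes>\<^sub>M Pi\<^sub>M I M) (\<lambda>p. g (fst p) * g (replace_on I A (fst p) (snd p)))"
proof (rule integrable_mult_of_square_integrable)
  show "integrable (Pi\<^sub>M I M \<Otimes>\<^sub>M Pi\<^sub>M I M) (\<lambda>p. (g (fst p))\<^sup>2)"
    using PP.integrable_comp_fst_iff[of "\<lambda>x. (g x)\<^sup>2"] square_int by simp
  show "integrable (Pi\<^sub>M I M \<Otimes>\<^sub>M Pi\<^sub>M I M) (\<lambda>p. (g (replace_on I A (fst p) (snd p)))\<^sup>2)"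
    using integrable_replace_on_iff[of "\<lambda>x. (g x)\<^sup>2" A] square_int by simp
qed simp_all

lemma integral_square_average_out:
  fixes g :: "('a \<Rightarrow> 'b) \<Rightarrow> real"
  assumes [measurable]: "g \<in> borel_measurable (Pi\<^sub>M I M)" and square_int: "integrable (Pi\<^sub>M I M) (\<lambda>x. (g x)\<^sup>2)"
  shows "(\<integral>x. (average_out M I A g x)\<^sup>2 \<partial>Pi\<^sub>M I M) = resample_moment M I g A"
proof -
  let ?c = "average_out M I A g"
  have "integrable (Pi\<^sub>M I M) (\<lambda>x. ?c x * g x)"
    using integrable_square_average_out[OF assms] square_int
    by (intro integrable_mult_of_square_integrable) simp_all
  then have int: "integrable (Pi\<^sub>M I M \<Otimes>\<^sub>M Pi\<^sub>M I M) (\<lambda>p. ?c (fst p) * g (replace_on I A (fst p) (snd p)))"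
    using integrable_replace_on_iff[of "\<lambda>x. ?c x * g x" A] by (simp add: average_out_replace_on)
  have "(\<integral>x. (?c x)\<^sup>2 \<partial>Pi\<^sub>M I M) = (\<integral>x. (\<integral>y. ?c x * g (replace_on I A x y) \<partial>Pi\<^sub>M I M) \<partial>Pi\<^sub>M I M)"
    by (simp add: power2_eq_square average_out_def[of M I A g])
  also have "\<dots> = (\<integral>p. ?c (fst p) * g (replace_on I A (fst p) (snd p)) \<partial>(Pi\<^sub>M I M \<Otimes>\<^sub>M Pi\<^sub>M I M))"
    using PP.integral_fst'[OF int] by simp
  also have "\<dots> = (\<integral>x. ?c x * g x \<partial>Pi\<^sub>M I M)"
    using integral_replace_on[of "\<lambda>x. ?c x * g x" A] by (simp add: average_out_replace_on)
  also have "\<dots> = (\<integral>x. (\<integral>y. g x * g (replace_on I A x y) \<partial>Pi\<^sub>M I M) \<partial>Pi\<^sub>M I M)"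
    by (simp add: average_out_def mult.commute)
  also have "\<dots> = resample_moment M I g A"
    using PP.integral_fst'[OF integrable_resample_product[OF assms, of A]]
    by (simp add: resample_moment_def)
  finally show ?thesis .
qed

lemma average_out_average_out_subset:
  fixes g :: "('a \<Rightarrow> 'b) \<Rightarrow> real"
  assumes [measurable]: "g \<in> borel_measurable (Pi\<^sub>M I M)" and "integrable (Pi\<^sub>M I M) g" and "A \<subseteq> B"
  shows "AE x in Pi\<^sub>M I M. average_out M I B (average_out M I A g) x = average_out M I B g x"
proof -
  have "integrable (Pi\<^sub>M I M \<Otimes>\<^sub>M Pi\<^sub>M I M) (\<lambda>p. g (replace_on I B (fst p) (snd p)))"
    using integrable_replace_on_iff[of g B] assms(2) by simp
  from PP.AE_integrable_fst'[OF this] AE_space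
  show ?thesis
  proof eventually_elim
    case (elim x)
    define h where "h = (\<lambda>y. g (replace_on I B x y))"
    have h_meas[measurable]: "h \<in> borel_measurable (Pi\<^sub>M I M)"
      using measurable_replace_on_right[OF elim(2)] unfolding h_def by measurable
    have "integrable (Pi\<^sub>M I M) h"
      using elim(1) by (simp add: h_def)
    then have int: "integrable (Pi\<^sub>M I M \<Otimes>\<^sub>M Pi\<^sub>M I M) (\<lambda>p. h (replace_on I A (fst p) (snd p)))"
      by (simp add: integrable_replace_on_iff[OF h_meas])
    have "average_out M I B (average_out M I A g) x
        = (\<integral>y. (\<integral>z. h (replace_on I A y z) \<partial>Pi\<^sub>M I M) \<partial>Pi\<^sub>M I M)"
      by (simp add: average_out_def h_def replace_on_replace_on_subset[OF \<open>A \<subseteq> B\<close>])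
    also have "\<dots> = (\<integral>p. h (replace_on I A (fst p) (snd p)) \<partial>(Pi\<^sub>M I M \<Otimes>\<^sub>M Pi\<^sub>M I M))"
      using PP.integral_fst'[OF int] by simp
    also have "\<dots> = average_out M I B g x"
      using integral_replace_on[OF h_meas, of A] by (simp add: average_out_def h_def)
    finally show ?case .
  qed
qed

lemma resample_moment_antimono:
  fixes g :: "('a \<Rightarrow> 'b) \<Rightarrow> real"
  assumes [measurable]: "g \<in> borel_measurable (Pi\<^sub>M I M)" and square_int: "integrable (Pi\<^sub>M I M) (\<lambda>x. (g x)\<^sup>2)"
    and "A \<subseteq> B"
  shows "resample_moment M I g B \<le> resample_moment M I g A"
proof -
  have "integrable (Pi\<^sub>M I M) g"
    by (rule P.square_integrable_imp_integrable[OF _ square_int]) measurable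
  then have "AE x in Pi\<^sub>M I M. average_out M I B (average_out M I A g) x = average_out M I B g x"
    by (rule average_out_average_out_subset[OF assms(1) _ \<open>A \<subseteq> B\<close>])
  then have ae: "AE x in Pi\<^sub>M I M. (average_out M I B g x)\<^sup>2 = (average_out M I B (average_out M I A g) x)\<^sup>2"
    by (auto elim: eventually_mono)
  have "resample_moment M I g B = (\<integral>x. (average_out M I B g x)\<^sup>2 \<partial>Pi\<^sub>M I M)"
    by (rule integral_square_average_out[OF assms(1,2), symmetric])
  also have "\<dots> = (\<integral>x. (average_out M I B (average_out M I A g) x)\<^sup>2 \<partial>Pi\<^sub>M I M)"
    by (rule integral_cong_AE[OF _ _ ae]; measurable)
  also have "\<dots> \<le> (\<integral>x. (average_out M I A g x)\<^sup>2 \<partial>Pi\<^sub>M I M)"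
    by (rule integral_square_average_out_le) (simp_all add: integrable_square_average_out[OF assms(1,2)])
  also have "\<dots> = resample_moment M I g A"
    by (rule integral_square_average_out[OF assms(1,2)])
  finally show ?thesis .
qed

end

lemma Int_stable_vimage_sets: "Int_stable {f -` A \<inter> \<Omega> | A. A \<in> sets N}"
proof (safe intro!: Int_stableI)
  fix A B assume "A \<in> sets N" "B \<in> sets N"
  then show "\<exists>C. (f -` A \<inter> \<Omega>) \<inter> (f -` B \<inter> \<Omega>) = f -` C \<inter> \<Omega> \<and> C \<in> sets N"
    by (intro exI[of _ "A \<inter> B"]) auto
qed

lemma (in prob_space) indep_varI_generators:
  assumes "random_variable S X" "random_variable T Y"
    and "indep_set {X -` A \<inter> space M | A. A \<in> sets S} {Y -` B \<inter> space M | B. B \<in> sets T}"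
  shows "indep_var S X T Y"
  unfolding indep_var_eq using assms by (auto intro!: indep_set_sigma_sets Int_stable_vimage_sets)

lemma (in prob_space) indep_set_mono:
  assumes "indep_set A B" "A' \<subseteq> A" "B' \<subseteq> B"
  shows "indep_set A' B'"
  using assms unfolding indep_set_def by (rule_tac indep_sets_mono_sets) (auto split: bool.split)

lemma (in prob_space) indep_var_comp_of_indep_set:
  assumes indep: "indep_set {X -` A \<inter> space M | A. A \<in> sets S} {Y -` B \<inter> space M | B. B \<in> sets T}"
    and X: "X \<in> measurable M S" and Y: "Y \<in> measurable M T"
    and g: "g \<in> measurable S S'" and h: "h \<in> measurable T T'"
  shows "indep_var S' (\<lambda>\<omega>. g (X \<omega>)) T' (\<lambda>\<omega>. h (Y \<omega>))"
proof (rule indep_varI_generators)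
  show "random_variable S' (\<lambda>\<omega>. g (X \<omega>))" "random_variable T' (\<lambda>\<omega>. h (Y \<omega>))"
    using measurable_compose[OF X g] measurable_compose[OF Y h] .
  have "{(\<lambda>\<omega>. g (X \<omega>)) -` A \<inter> space M | A. A \<in> sets S'} \<subseteq> {X -` A \<inter> space M | A. A \<in> sets S}"
  proof safe
    fix A assume "A \<in> sets S'"
    then show "\<exists>B. (\<lambda>\<omega>. g (X \<omega>)) -` A \<inter> space M = X -` B \<inter> space M \<and> B \<in> sets S"
      using measurable_space[OF X] measurable_sets[OF g] by (intro exI[of _ "g -` A \<inter> space S"]) auto
  qed
  moreover have "{(\<lambda>\<omega>. h (Y \<omega>)) -` B \<inter> space M | B. B \<in> sets T'} \<subseteq> {Y -` B \<inter> space M | B. B \<in> sets T}"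
  proof safe
    fix B assume "B \<in> sets T'"
    then show "\<exists>C. (\<lambda>\<omega>. h (Y \<omega>)) -` B \<inter> space M = Y -` C \<inter> space M \<and> C \<in> sets T"
      using measurable_space[OF Y] measurable_sets[OF h] by (intro exI[of _ "h -` B \<inter> space T"]) auto
  qed
  ultimately show "indep_set {(\<lambda>\<omega>. g (X \<omega>)) -` A \<inter> space M | A. A \<in> sets S'}
      {(\<lambda>\<omega>. h (Y \<omega>)) -` B \<inter> space M | B. B \<in> sets T'}"
    by (rule indep_set_mono[OF indep])
qed

lemma (in prob_space) indep_vars_reindex:
  assumes "indep_vars N X J" "inj_on h I" "h ` I \<subseteq> J"
  shows "indep_vars (\<lambda>i. N (h i)) (\<lambda>i. X (h i)) I"
proof -
  have "indep_vars (\<lambda>i. Pi\<^sub>M {h i} N) (\<lambda>i \<omega>. \<lambda>j\<in>{h i}. X j \<omega>) I"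
    using assms by (intro indep_vars_restrict) (auto simp: disjoint_family_on_def inj_on_def)
  then have "indep_vars (\<lambda>i. N (h i)) (\<lambda>i \<omega>. (\<lambda>j\<in>{h i}. X j \<omega>) (h i)) I"
    by (rule indep_vars_compose2) (auto intro: measurable_component_singleton)
  then show ?thesis
    by simp
qed

lemma (in prob_space) distr_restrict_iid:
  assumes indep: "indep_vars (\<lambda>_. N) X I" and "I \<noteq> {}"
    and distr_X: "\<And>i. i \<in> I \<Longrightarrow> distr M N (X i) = \<mu>"
  shows "distr M (Pi\<^sub>M I (\<lambda>_. N)) (\<lambda>\<omega>. \<lambda>i\<in>I. X i \<omega>) = Pi\<^sub>M I (\<lambda>_. \<mu>)"
proof -
  have "distr M (Pi\<^sub>M I (\<lambda>_. N)) (\<lambda>\<omega>. \<lambda>i\<in>I. X i \<omega>) = Pi\<^sub>M I (\<lambda>i. distr M N (X i))"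
    using indep_vars_iff_distr_eq_PiM'[where I=I and M'="\<lambda>_. N" and X=X] indep \<open>I \<noteq> {}\<close>
    by (auto simp: indep_vars_def)
  also have "\<dots> = Pi\<^sub>M I (\<lambda>_. \<mu>)"
    by (rule PiM_cong) (simp_all add: distr_X)
  finally show ?thesis .
qed

lemma (in prob_space) distr_indep_copies:
  assumes indep: "indep_vars (\<lambda>_. N) (case_sum Y Y') (I <+> I)" and "I \<noteq> {}"
    and distr_Y: "\<And>i. i \<in> I \<Longrightarrow> distr M N (Y i) = \<mu>"
    and distr_Y': "\<And>i. i \<in> I \<Longrightarrow> distr M N (Y' i) = \<mu>"
  shows "distr M (Pi\<^sub>M I (\<lambda>_. N) \<Otimes>\<^sub>M Pi\<^sub>M I (\<lambda>_. N)) (\<lambda>\<omega>. (\<lambda>i\<in>I. Y i \<omega>, \<lambda>i\<in>I. Y' i \<omega>))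
    = Pi\<^sub>M I (\<lambda>_. \<mu>) \<Otimes>\<^sub>M Pi\<^sub>M I (\<lambda>_. \<mu>)"
proof -
  have "indep_vars (\<lambda>_. N) Y I" "indep_vars (\<lambda>_. N) Y' I"
    using indep_vars_reindex[OF indep, of Inl I] indep_vars_reindex[OF indep, of Inr I]
    by (auto simp: Plus_def)
  then have distr_vectors:
    "distr M (Pi\<^sub>M I (\<lambda>_. N)) (\<lambda>\<omega>. \<lambda>i\<in>I. Y i \<omega>) = Pi\<^sub>M I (\<lambda>_. \<mu>)"
    "distr M (Pi\<^sub>M I (\<lambda>_. N)) (\<lambda>\<omega>. \<lambda>i\<in>I. Y' i \<omega>) = Pi\<^sub>M I (\<lambda>_. \<mu>)"
    using distr_restrict_iid \<open>I \<noteq> {}\<close> distr_Y distr_Y' by blast+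
  have "indep_var (Pi\<^sub>M (Inl ` I) (\<lambda>_. N)) (\<lambda>\<omega>. \<lambda>k\<in>Inl ` I. case_sum Y Y' k \<omega>)
      (Pi\<^sub>M (Inr ` I) (\<lambda>_. N)) (\<lambda>\<omega>. \<lambda>k\<in>Inr ` I. case_sum Y Y' k \<omega>)"
    by (rule indep_var_restrict[OF indep]) auto
  then have "indep_var (Pi\<^sub>M I (\<lambda>_. N)) ((\<lambda>z. \<lambda>i\<in>I. z (Inl i)) \<circ> (\<lambda>\<omega>. \<lambda>k\<in>Inl ` I. case_sum Y Y' k \<omega>))
      (Pi\<^sub>M I (\<lambda>_. N)) ((\<lambda>z. \<lambda>i\<in>I. z (Inr i)) \<circ> (\<lambda>\<omega>. \<lambda>k\<in>Inr ` I. case_sum Y Y' k \<omega>))"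
    by (rule indep_var_compose) (auto intro!: measurable_restrict measurable_component_singleton)
  moreover have "((\<lambda>z. \<lambda>i\<in>I. z (Inl i)) \<circ> (\<lambda>\<omega>. \<lambda>k\<in>Inl ` I. case_sum Y Y' k \<omega>)) = (\<lambda>\<omega>. \<lambda>i\<in>I. Y i \<omega>)"
    and "((\<lambda>z. \<lambda>i\<in>I. z (Inr i)) \<circ> (\<lambda>\<omega>. \<lambda>k\<in>Inr ` I. case_sum Y Y' k \<omega>)) = (\<lambda>\<omega>. \<lambda>i\<in>I. Y' i \<omega>)"
    by (auto simp: fun_eq_iff)
  ultimately show ?thesis
    using distr_vectors by (simp add: indep_var_distribution_eq)
qed

lemma (in prob_space)
  fixes W :: "'a \<Rightarrow> 'w" and V :: "'a \<Rightarrow> 'p" and G :: "'p \<Rightarrow> 'w \<Rightarrow> real"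
  assumes indep: "indep_set {W -` A \<inter> space M | A. A \<in> sets N} {V -` B \<inter> space M | B. B \<in> sets (count_space T)}"
    and W: "W \<in> measurable M N" and V: "V \<in> measurable M (count_space T)" and "finite T"
    and G_meas: "\<And>p. p \<in> T \<Longrightarrow> G p \<in> borel_measurable N"
    and G_int: "\<And>p. p \<in> T \<Longrightarrow> integrable (distr M N W) (G p)"
  shows integrable_indep_finite_mixture: "integrable M (\<lambda>\<omega>. G (V \<omega>) (W \<omega>))"
    and integral_indep_finite_mixture: "(\<integral>\<omega>. G (V \<omega>) (W \<omega>) \<partial>M)
      = (\<Sum>p\<in>T. \<P>(\<omega> in M. V \<omega> = p) * (\<integral>w. G p w \<partial>distr M N W))"
proof -
  have summand: "integrable M (\<lambda>\<omega>. G p (W \<omega>) * indicator {p} (V \<omega>)) \<and>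
      (\<integral>\<omega>. G p (W \<omega>) * indicator {p} (V \<omega>) \<partial>M) = \<P>(\<omega> in M. V \<omega> = p) * (\<integral>w. G p w \<partial>distr M N W)"
    if p: "p \<in> T" for p
  proof -
    have indep_p: "indep_var borel (\<lambda>\<omega>. G p (W \<omega>)) borel (\<lambda>\<omega>. indicator {p} (V \<omega>) :: real)"
      using G_meas[OF p] by (intro indep_var_comp_of_indep_set[OF indep W V]) auto
    have int_G: "integrable M (\<lambda>\<omega>. G p (W \<omega>))"
      using G_int[OF p] integrable_distr_eq[OF W G_meas[OF p]] by simp
    have indicator_V: "(\<lambda>\<omega>. indicator {p} (V \<omega>) :: real) = indicator (V -` {p})"
      by (auto simp: fun_eq_iff split: split_indicator)
    have "V -` {p} \<inter> space M \<in> sets M"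
      using measurable_sets[OF V, of "{p}"] p by simp
    then have int_V: "integrable M (\<lambda>\<omega>. indicator {p} (V \<omega>) :: real)"
      unfolding indicator_V by (simp add: integrable_indicator_iff less_top[symmetric] emeasure_finite)
    have "(\<integral>\<omega>. indicator {p} (V \<omega>) \<partial>M) = \<P>(\<omega> in M. V \<omega> = p)"
      unfolding indicator_V by (auto intro!: arg_cong[where f = prob])
    then show ?thesis
      using indep_var_integrable[OF indep_p int_G int_V] indep_var_lebesgue_integral[OF indep_p int_G int_V]
        integral_distr[OF W G_meas[OF p]]
      by (simp add: mult.commute)
  qed
  have split: "G (V \<omega>) (W \<omega>) = (\<Sum>p\<in>T. G p (W \<omega>) * indicator {p} (V \<omega>))" if "\<omega> \<in> space M" for \<omega>
  proof -
    have "(\<Sum>p\<in>T. G p (W \<omega>) * indicator {p} (V \<omega>)) = (\<Sum>p\<in>T. if p = V \<omega> then G p (W \<omega>) else 0)"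
      by (intro sum.cong) (auto split: split_indicator)
    then show ?thesis
      using measurable_space[OF V that] \<open>finite T\<close> by simp
  qed
  show "integrable M (\<lambda>\<omega>. G (V \<omega>) (W \<omega>))"
    using summand by (subst Bochner_Integration.integrable_cong[OF refl split]) auto
  show "(\<integral>\<omega>. G (V \<omega>) (W \<omega>) \<partial>M) = (\<Sum>p\<in>T. \<P>(\<omega> in M. V \<omega> = p) * (\<integral>w. G p w \<partial>distr M N W))"
    using summand by (subst Bochner_Integration.integral_cong[OF refl split]) (auto intro!: sum.cong)
qed

lemma (in prob_space) sum_prob_eq_1:
  assumes V: "V \<in> measurable M (count_space T)" and "finite T"
  shows "(\<Sum>p\<in>T. \<P>(\<omega> in M. V \<omega> = p)) = 1"
proof -
  have "{\<omega> \<in> space M. V \<omega> = p} \<in> events" if "p \<in> T" for p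
    using measurable_sets[OF V, of "{p}"] that by (simp add: vimage_def Int_def conj_commute)
  then have "\<P>(\<omega> in M. True) = (\<Sum>p\<in>T. \<P>(\<omega> in M. V \<omega> = p))"
    using measurable_space[OF V] \<open>finite T\<close> by (intro prob_sum) auto
  then show ?thesis
    by (simp add: prob_space)
qed

lemma (in prob_space)
  fixes Y Y' :: "'i \<Rightarrow> 'a \<Rightarrow> real" and V :: "'a \<Rightarrow> 'c"
    and g :: "'i set \<Rightarrow> ('i \<Rightarrow> real) \<times> ('i \<Rightarrow> real) \<Rightarrow> real"
  assumes sets_\<mu>: "sets \<mu> = sets borel"
    and distr_W: "distr M (Pi\<^sub>M I (\<lambda>_. borel) \<Otimes>\<^sub>M Pi\<^sub>M I (\<lambda>_. borel)) (\<lambda>\<omega>. (\<lambda>i\<in>I. Y i \<omega>, \<lambda>i\<in>I. Y' i \<omega>))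
      = Pi\<^sub>M I (\<lambda>_. \<mu>) \<Otimes>\<^sub>M Pi\<^sub>M I (\<lambda>_. \<mu>)"
    and W: "(\<lambda>\<omega>. (\<lambda>i\<in>I. Y i \<omega>, \<lambda>i\<in>I. Y' i \<omega>)) \<in> measurable M (Pi\<^sub>M I (\<lambda>_. borel) \<Otimes>\<^sub>M Pi\<^sub>M I (\<lambda>_. borel))"
    and V: "V \<in> measurable M (count_space T)" and "finite T"
    and indep: "indep_set
      {(\<lambda>\<omega>. (\<lambda>i\<in>I. Y i \<omega>, \<lambda>i\<in>I. Y' i \<omega>)) -` A \<inter> space M | A. A \<in> sets (Pi\<^sub>M I (\<lambda>_. borel) \<Otimes>\<^sub>M Pi\<^sub>M I (\<lambda>_. borel))}
      {V -` B \<inter> space M | B. B \<in> sets (count_space T)}"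
    and g_meas: "\<And>A. g A \<in> borel_measurable (Pi\<^sub>M I (\<lambda>_. \<mu>) \<Otimes>\<^sub>M Pi\<^sub>M I (\<lambda>_. \<mu>))"
    and g_int: "\<And>A. integrable (Pi\<^sub>M I (\<lambda>_. \<mu>) \<Otimes>\<^sub>M Pi\<^sub>M I (\<lambda>_. \<mu>)) (g A)"
    and R: "\<And>\<omega>. \<omega> \<in> space M \<Longrightarrow> R \<omega> = sel (V \<omega>)"
  shows integrable_resample_mixture: "integrable M (\<lambda>\<omega>. g (R \<omega>) (\<lambda>i\<in>I. Y i \<omega>, \<lambda>i\<in>I. Y' i \<omega>))"
    and integral_resample_mixture: "(\<integral>\<omega>. g (R \<omega>) (\<lambda>i\<in>I. Y i \<omega>, \<lambda>i\<in>I. Y' i \<omega>) \<partial>M)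
      = (\<Sum>p\<in>T. \<P>(\<omega> in M. V \<omega> = p) * (\<integral>w. g (sel p) w \<partial>(Pi\<^sub>M I (\<lambda>_. \<mu>) \<Otimes>\<^sub>M Pi\<^sub>M I (\<lambda>_. \<mu>))))"
proof -
  have sets_P: "sets (Pi\<^sub>M I (\<lambda>_. \<mu>)) = sets (Pi\<^sub>M I (\<lambda>_. borel :: real measure))"
    by (rule sets_PiM_cong) (simp_all add: sets_\<mu>)
  have "g A \<in> borel_measurable (Pi\<^sub>M I (\<lambda>_. borel) \<Otimes>\<^sub>M Pi\<^sub>M I (\<lambda>_. borel))" for A
    using g_meas[of A] unfolding measurable_cong_sets[OF sets_pair_measure_cong[OF sets_P sets_P] refl] .
  then show "integrable M (\<lambda>\<omega>. g (R \<omega>) (\<lambda>i\<in>I. Y i \<omega>, \<lambda>i\<in>I. Y' i \<omega>))"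
    and "(\<integral>\<omega>. g (R \<omega>) (\<lambda>i\<in>I. Y i \<omega>, \<lambda>i\<in>I. Y' i \<omega>) \<partial>M)
      = (\<Sum>p\<in>T. \<P>(\<omega> in M. V \<omega> = p) * (\<integral>w. g (sel p) w \<partial>(Pi\<^sub>M I (\<lambda>_. \<mu>) \<Otimes>\<^sub>M Pi\<^sub>M I (\<lambda>_. \<mu>))))"
    using integrable_indep_finite_mixture[OF indep W V \<open>finite T\<close>, of "\<lambda>p. g (sel p)"]
      integral_indep_finite_mixture[OF indep W V \<open>finite T\<close>, of "\<lambda>p. g (sel p)"] g_int R
    by (simp_all add: distr_W cong: Bochner_Integration.integrable_cong Bochner_Integration.integral_cong)
qed

lemma (in prob_space) covariance_resample_eq:
  fixes Y Y' :: "'i \<Rightarrow> 'a \<Rightarrow> real" and V :: "'a \<Rightarrow> 'c" and f :: "('i \<Rightarrow> real) \<Rightarrow> real"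
  assumes "prob_space \<mu>" "finite I" and sets_\<mu>: "sets \<mu> = sets borel"
    and distr_W: "distr M (Pi\<^sub>M I (\<lambda>_. borel) \<Otimes>\<^sub>M Pi\<^sub>M I (\<lambda>_. borel)) (\<lambda>\<omega>. (\<lambda>i\<in>I. Y i \<omega>, \<lambda>i\<in>I. Y' i \<omega>))
      = Pi\<^sub>M I (\<lambda>_. \<mu>) \<Otimes>\<^sub>M Pi\<^sub>M I (\<lambda>_. \<mu>)"
    and W: "(\<lambda>\<omega>. (\<lambda>i\<in>I. Y i \<omega>, \<lambda>i\<in>I. Y' i \<omega>)) \<in> measurable M (Pi\<^sub>M I (\<lambda>_. borel) \<Otimes>\<^sub>M Pi\<^sub>M I (\<lambda>_. borel))"
    and V: "V \<in> measurable M (count_space T)" and "finite T"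
    and indep: "indep_set
      {(\<lambda>\<omega>. (\<lambda>i\<in>I. Y i \<omega>, \<lambda>i\<in>I. Y' i \<omega>)) -` A \<inter> space M | A. A \<in> sets (Pi\<^sub>M I (\<lambda>_. borel) \<Otimes>\<^sub>M Pi\<^sub>M I (\<lambda>_. borel))}
      {V -` B \<inter> space M | B. B \<in> sets (count_space T)}"
    and f_meas: "f \<in> borel_measurable (Pi\<^sub>M I (\<lambda>_. borel))"
    and f_sq: "integrable (Pi\<^sub>M I (\<lambda>_. \<mu>)) (\<lambda>x. (f x)\<^sup>2)"
    and R: "\<And>\<omega>. \<omega> \<in> space M \<Longrightarrow> R \<omega> = sel (V \<omega>)"
  shows "covariance M (\<lambda>\<omega>. f (\<lambda>i\<in>I. Y i \<omega>)) (\<lambda>\<omega>. f (resample I Y Y' R \<omega>))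
    = (\<Sum>p\<in>T. \<P>(\<omega> in M. V \<omega> = p) * resample_moment (\<lambda>_. \<mu>) I f (sel p))
      - (\<integral>x. f x \<partial>Pi\<^sub>M I (\<lambda>_. \<mu>))\<^sup>2"
proof -
  interpret Prod: finite_product_prob_space "\<lambda>_. \<mu>" I
    by (rule finite_product_prob_space_const) fact+
  let ?P = "Pi\<^sub>M I (\<lambda>_. \<mu>)"
  note mixture = integrable_resample_mixture[where R = R and sel = sel, OF sets_\<mu> distr_W W V \<open>finite T\<close> indep _ _ R]
    integral_resample_mixture[where R = R and sel = sel, OF sets_\<mu> distr_W W V \<open>finite T\<close> indep _ _ R]
  have sets_P: "sets ?P = sets (Pi\<^sub>M I (\<lambda>_. borel))"
    by (rule sets_PiM_cong) (simp_all add: sets_\<mu>)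
  have f_meas_P[measurable]: "f \<in> borel_measurable ?P"
    using f_meas unfolding measurable_cong_sets[OF sets_P refl] .
  have meas: "(\<lambda>w. f (fst w)) \<in> borel_measurable (?P \<Otimes>\<^sub>M ?P)"
    "(\<lambda>w. f (replace_on I A (fst w) (snd w))) \<in> borel_measurable (?P \<Otimes>\<^sub>M ?P)"
    "(\<lambda>w. f (fst w) * f (replace_on I A (fst w) (snd w))) \<in> borel_measurable (?P \<Otimes>\<^sub>M ?P)" for A
    by measurable
  have f_int: "integrable ?P f"
    by (rule Prod.P.square_integrable_imp_integrable[OF f_meas_P f_sq])
  note sum_1 = sum_prob_eq_1[OF V \<open>finite T\<close>]
  have X: "integrable M (\<lambda>\<omega>. f (\<lambda>i\<in>I. Y i \<omega>))" "(\<integral>\<omega>. f (\<lambda>i\<in>I. Y i \<omega>) \<partial>M) = integral\<^sup>L ?P f"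
    using mixture[OF meas(1)] Prod.PP.integrable_comp_fst_iff[OF f_meas_P] Prod.PP.integral_comp_fst[OF f_meas_P] f_int sum_1
    by (simp_all add: sum_distrib_right[symmetric])
  have Z: "integrable M (\<lambda>\<omega>. f (resample I Y Y' R \<omega>))" "(\<integral>\<omega>. f (resample I Y Y' R \<omega>) \<partial>M) = integral\<^sup>L ?P f"
    using mixture[OF meas(2)] f_int sum_1
    by (simp_all add: resample_eq_replace_on Prod.integrable_replace_on_iff Prod.integral_replace_on sum_distrib_right[symmetric])
  have XZ: "integrable M (\<lambda>\<omega>. f (\<lambda>i\<in>I. Y i \<omega>) * f (resample I Y Y' R \<omega>))"
    "(\<integral>\<omega>. f (\<lambda>i\<in>I. Y i \<omega>) * f (resample I Y Y' R \<omega>) \<partial>M)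
      = (\<Sum>p\<in>T. \<P>(\<omega> in M. V \<omega> = p) * resample_moment (\<lambda>_. \<mu>) I f (sel p))"
    using mixture[OF meas(3)] Prod.integrable_resample_product[OF f_meas_P f_sq]
    by (simp_all add: resample_eq_replace_on resample_moment_def)
  show ?thesis
    using covariance_eq[OF X(1) Z(1) XZ(1)] X(2) Z(2) XZ(2) by (simp add: power2_eq_square)
qed

lemma (in prob_space) covariance_resample_antimono:
  fixes Y Y' :: "'i \<Rightarrow> 'a \<Rightarrow> real" and f :: "('i \<Rightarrow> real) \<Rightarrow> real"
  assumes "prob_space \<mu>" "finite I" and sets_\<mu>: "sets \<mu> = sets borel"
    and distr_W: "distr M (Pi\<^sub>M I (\<lambda>_. borel) \<Otimes>\<^sub>M Pi\<^sub>M I (\<lambda>_. borel)) (\<lambda>\<omega>. (\<lambda>i\<in>I. Y i \<omega>, \<lambda>i\<in>I. Y' i \<omega>))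
      = Pi\<^sub>M I (\<lambda>_. \<mu>) \<Otimes>\<^sub>M Pi\<^sub>M I (\<lambda>_. \<mu>)"
    and W: "(\<lambda>\<omega>. (\<lambda>i\<in>I. Y i \<omega>, \<lambda>i\<in>I. Y' i \<omega>)) \<in> measurable M (Pi\<^sub>M I (\<lambda>_. borel) \<Otimes>\<^sub>M Pi\<^sub>M I (\<lambda>_. borel))"
    and V: "(\<lambda>\<omega>. (S \<omega>, S' \<omega>)) \<in> measurable M (count_space (Pow I \<times> Pow I))"
    and indep: "indep_set
      {(\<lambda>\<omega>. (\<lambda>i\<in>I. Y i \<omega>, \<lambda>i\<in>I. Y' i \<omega>)) -` A \<inter> space M | A. A \<in> sets (Pi\<^sub>M I (\<lambda>_. borel) \<Otimes>\<^sub>M Pi\<^sub>M I (\<lambda>_. borel))}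
      {(\<lambda>\<omega>. (S \<omega>, S' \<omega>)) -` B \<inter> space M | B. B \<in> sets (count_space (Pow I \<times> Pow I))}"
    and f_meas: "f \<in> borel_measurable (Pi\<^sub>M I (\<lambda>_. borel))"
    and f_sq: "integrable M (\<lambda>\<omega>. (f (\<lambda>i\<in>I. Y i \<omega>))\<^sup>2)"
    and subset: "AE \<omega> in M. S \<omega> \<subseteq> S' \<omega>"
  shows "covariance M (\<lambda>\<omega>. f (\<lambda>i\<in>I. Y i \<omega>)) (\<lambda>\<omega>. f (resample I Y Y' S' \<omega>))
    \<le> covariance M (\<lambda>\<omega>. f (\<lambda>i\<in>I. Y i \<omega>)) (\<lambda>\<omega>. f (resample I Y Y' S \<omega>))"
proof -
  interpret Prod: finite_product_prob_space "\<lambda>_. \<mu>" I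
    by (rule finite_product_prob_space_const) fact+
  let ?P = "Pi\<^sub>M I (\<lambda>_. \<mu>)" and ?B = "Pi\<^sub>M I (\<lambda>_. borel :: real measure)"
  have sets_P: "sets ?P = sets ?B"
    by (rule sets_PiM_cong) (simp_all add: sets_\<mu>)
  have f_meas_P: "f \<in> borel_measurable ?P"
    using f_meas unfolding measurable_cong_sets[OF sets_P refl] .
  have sq_fst_meas: "(\<lambda>w. (f (fst w))\<^sup>2) \<in> borel_measurable (?B \<Otimes>\<^sub>M ?B)"
    using f_meas by measurable
  have "integrable (distr M (?B \<Otimes>\<^sub>M ?B) (\<lambda>\<omega>. (\<lambda>i\<in>I. Y i \<omega>, \<lambda>i\<in>I. Y' i \<omega>))) (\<lambda>w. (f (fst w))\<^sup>2)"
    using f_sq by (simp add: integrable_distr_eq[OF W sq_fst_meas])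
  then have f_sq_P: "integrable ?P (\<lambda>x. (f x)\<^sup>2)"
    using Prod.PP.integrable_comp_fst_iff[of "\<lambda>x. (f x)\<^sup>2"] f_meas_P by (simp add: distr_W)
  have "\<P>(\<omega> in M. (S \<omega>, S' \<omega>) = p) * resample_moment (\<lambda>_. \<mu>) I f (snd p)
      \<le> \<P>(\<omega> in M. (S \<omega>, S' \<omega>) = p) * resample_moment (\<lambda>_. \<mu>) I f (fst p)" for p
  proof (cases "fst p \<subseteq> snd p")
    case True
    then show ?thesis
      by (intro mult_left_mono Prod.resample_moment_antimono f_meas_P f_sq_P measure_nonneg)
  next
    case False
    with subset have "\<P>(\<omega> in M. (S \<omega>, S' \<omega>) = p) = 0"
      by (intro prob_eq_0_AE) (auto elim!: eventually_mono)
    then show ?thesis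
      by simp
  qed
  then show ?thesis
    using covariance_resample_eq[OF assms(1-6) _ indep f_meas f_sq_P, where R = S and sel = fst]
      covariance_resample_eq[OF assms(1-6) _ indep f_meas f_sq_P, where R = S' and sel = snd]
    by (simp add: \<open>finite I\<close> sum_mono)
qed

theorem lemma6p1:
  fixes M :: "'a measure" and I :: "'i set" and \<mu> :: "real measure"
    and Y Y' :: "'i \<Rightarrow> 'a \<Rightarrow> real"
    and f :: "('i \<Rightarrow> real) \<Rightarrow> real"
    and S S' :: "'a \<Rightarrow> 'i set"
  assumes "prob_space M"
    and "finite I"
    and indepY: "prob_space.indep_vars M (\<lambda>_. borel) (case_sum Y Y') (I <+> I)"
    and distY: "\<And>i. i \<in> I \<Longrightarrow> distr M borel (Y i) = \<mu>"
    and distY': "\<And>i. i \<in> I \<Longrightarrow> distr M borel (Y' i) = \<mu>"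
    and f_meas: "f \<in> borel_measurable (PiM I (\<lambda>_. borel))"
    and f_sq: "integrable M (\<lambda>\<omega>. (f (\<lambda>i\<in>I. Y i \<omega>))\<^sup>2)"
    and S_meas: "S \<in> measurable M (count_space (Pow I))"
    and S'_meas: "S' \<in> measurable M (count_space (Pow I))"
    and indepS: "prob_space.indep_set M
        {(\<lambda>\<omega>. ((\<lambda>i\<in>I. Y i \<omega>), (\<lambda>i\<in>I. Y' i \<omega>))) -` A \<inter> space M | A.
           A \<in> sets ((PiM I (\<lambda>_. borel)) \<Otimes>\<^sub>M (PiM I (\<lambda>_. borel)))}
        {(\<lambda>\<omega>. (S \<omega>, S' \<omega>)) -` B \<inter> space M | B.
           B \<in> sets ((count_space (Pow I)) \<Otimes>\<^sub>M (count_space (Pow I)))}"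
    and sub: "AE \<omega> in M. S \<omega> \<subseteq> S' \<omega>"
  shows "covariance M (\<lambda>\<omega>. f (\<lambda>i\<in>I. Y i \<omega>)) (\<lambda>\<omega>. f (resample I Y Y' S \<omega>))
       \<ge> covariance M (\<lambda>\<omega>. f (\<lambda>i\<in>I. Y i \<omega>)) (\<lambda>\<omega>. f (resample I Y Y' S' \<omega>))"
proof (cases "I = {}")
  case True
  \<comment> \<open>Then nothing constrains \<mu>, but both resampled vectors are the empty function.\<close>
  then show ?thesis
    by (simp add: resample_def restrict_def)
next
  case False
  interpret prob_space M by fact
  have rv_sum: "random_variable borel (case_sum Y Y' k)" if "k \<in> I <+> I" for k
    using indepY that unfolding indep_vars_def by blast
  have rv: "random_variable borel (Y i)" "random_variable borel (Y' i)" if "i \<in> I" for i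
    using rv_sum[of "Inl i"] rv_sum[of "Inr i"] that by auto
  from False obtain i where "i \<in> I" by blast
  have "prob_space \<mu>"
    using distY[OF \<open>i \<in> I\<close>] prob_space_distr[OF rv(1)[OF \<open>i \<in> I\<close>]] by simp
  have "sets \<mu> = sets borel"
    using sets_distr[of M borel "Y i"] distY[OF \<open>i \<in> I\<close>] by simp
  have W: "(\<lambda>\<omega>. (\<lambda>i\<in>I. Y i \<omega>, \<lambda>i\<in>I. Y' i \<omega>)) \<in> measurable M (Pi\<^sub>M I (\<lambda>_. borel) \<Otimes>\<^sub>M Pi\<^sub>M I (\<lambda>_. borel))"
    by (intro measurable_Pair measurable_restrict rv)
  have count_pair: "count_space (Pow I) \<Otimes>\<^sub>M count_space (Pow I) = count_space (Pow I \<times> Pow I)"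
    using \<open>finite I\<close> by (simp add: pair_measure_countable countable_finite)
  have V: "(\<lambda>\<omega>. (S \<omega>, S' \<omega>)) \<in> measurable M (count_space (Pow I \<times> Pow I))"
    using measurable_Pair[OF S_meas S'_meas] by (simp add: count_pair)
  show ?thesis
    using covariance_resample_antimono[OF \<open>prob_space \<mu>\<close> \<open>finite I\<close> \<open>sets \<mu> = sets borel\<close>
        distr_indep_copies[OF indepY False distY distY'] W V indepS[unfolded count_pair] f_meas f_sq sub] .
qed

end
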